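(* Let $(M,g,S)$ be as in the context, let $p\in M$, and let $u\in T_pM$ induce an $S$-basis, with $\varphi=\angle(u,Su)$. Then: (i) $u$ is space-like if and only if $\varphi\in(\frac{\pi}{4},\frac{\pi}{2})$; (ii) $u$ is isotropic if and only if $\varphi=\frac{\pi}{2}$; (iii) $u$ is time-like if and only if $\varphi\in(\frac{\pi}{2},\frac{3\pi}{4})$.
   Context: $M$ is a 4-dimensional differentiable manifold with a positive definite (Riemannian) metric $g$ and a tensor field $S$ of type $(1,1)$ whose components in some local coordinate system form the matrix with rows $(0,1,0,0)$, $(0,0,1,0)$, $(0,0,0,1)$, $(-1,0,0,0)$; hence $S^4=-\mathrm{id}$. It is assumed that $g(Su,Sv)=g(u,v)$ for all vector fields $u,v$. The associated metric is $\tilde g(u,v)=g(u,Sv)+g(Su,v)$. A vector $u$ is space-like if $\tilde g(u,u)>0$, time-like if $\tilde g(u,u)<0$, and isotropic if $u\neq 0$ and $\tilde g(u,u)=0$. A vector $u\in T_pM$ induces an $S$-basis if $\{u,Su,S^2u,S^3u\}$ is a basis of $T_pM$. Norms and angles are taken with respect to $g$: $\|u\|=\sqrt{g(u,u)}$, $\cos\angle(u,v)=g(u,v)/(\|u\|\|v\|)$. It is known that if $u$ induces an $S$-basis then $\varphi=\angle(u,Su)$ satisfies $\frac{\pi}{4}<\varphi<\frac{3\pi}{4}$. *)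

theory Defs
  imports "HOL-Analysis.Analysis"
begin

text \<open>We work pointwise: the tangent space T_pM is identified (via the given local
coordinates) with real^4, the structure S_p is given by the stated coordinate matrix,
and g_p is a bilinear, symmetric, positive definite form on it.\<close>

definition S_mat :: "real^4^4" where
  "S_mat = vector [vector [0,1,0,0], vector [0,0,1,0], vector [0,0,0,1], vector [-1,0,0,0]]"

definition S_op :: "real^4 \<Rightarrow> real^4" where
  "S_op u = S_mat *v u"

definition assoc_metric :: "(real^4 \<Rightarrow> real^4 \<Rightarrow> real) \<Rightarrow> real^4 \<Rightarrow> real^4 \<Rightarrow> real" where
  "assoc_metric g u v = g u (S_op v) + g (S_op u) v"

definition space_like :: "(real^4 \<Rightarrow> real^4 \<Rightarrow> real) \<Rightarrow> real^4 \<Rightarrow> bool" where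
  "space_like g u \<longleftrightarrow> assoc_metric g u u > 0"

definition time_like :: "(real^4 \<Rightarrow> real^4 \<Rightarrow> real) \<Rightarrow> real^4 \<Rightarrow> bool" where
  "time_like g u \<longleftrightarrow> assoc_metric g u u < 0"

definition isotropic :: "(real^4 \<Rightarrow> real^4 \<Rightarrow> real) \<Rightarrow> real^4 \<Rightarrow> bool" where
  "isotropic g u \<longleftrightarrow> u \<noteq> 0 \<and> assoc_metric g u u = 0"

definition induces_S_basis :: "real^4 \<Rightarrow> bool" where
  "induces_S_basis u \<longleftrightarrow>
     (let B = {u, S_op u, S_op (S_op u), S_op (S_op (S_op u))}
      in card B = 4 \<and> independent B \<and> span B = UNIV)"

definition g_norm :: "(real^4 \<Rightarrow> real^4 \<Rightarrow> real) \<Rightarrow> real^4 \<Rightarrow> real" where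
  "g_norm g u = sqrt (g u u)"

definition g_angle :: "(real^4 \<Rightarrow> real^4 \<Rightarrow> real) \<Rightarrow> real^4 \<Rightarrow> real^4 \<Rightarrow> real" where
  "g_angle g u v = arccos (g u v / (g_norm g u * g_norm g v))"

end

theory Submission imports Defs begin

text \<open>Put \<open>p = g(u,u)\<close> and \<open>a = g(u,Su)\<close>. Since \<open>S\<close> is a \<open>g\<close>-isometry with \<open>S\<^sup>4 = -id\<close>,
  \<open>g(u,S\<^sup>2u) = 0\<close> and \<open>g(u,S\<^sup>3u) = -a\<close>, so for \<open>e = \<plusminus>1\<close> the vector
  \<open>w = \<surd>2 u - e (Su - S\<^sup>3u)\<close>, which is nonzero because \<open>u\<close> induces an \<open>S\<close>-basis, has
  \<open>0 < g(w,w) = 4p - 4\<surd>2 e a\<close>. Hence \<open>\<bar>cos \<phi>\<bar> = \<bar>a\<bar>/p < \<surd>2/2\<close>, i.e. \<open>\<pi>/4 < \<phi> < 3\<pi>/4\<close>,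
  and the sign of \<open>g~(u,u) = 2a = 2p cos \<phi>\<close> is decided by whether \<open>\<phi>\<close> lies below, at or
  above \<open>\<pi>/2\<close>.\<close>

lemma S_op_nth:
  "S_op x $ 1 = x $ 2" "S_op x $ 2 = x $ 3" "S_op x $ 3 = x $ 4" "S_op x $ 4 = - x $ 1"
  by (simp_all add: S_op_def S_mat_def matrix_vector_mult_def sum_4 vector_def)

lemma S_op_pow4: "S_op (S_op (S_op (S_op x))) = - x"
  by (simp add: vec_eq_iff forall_4 S_op_nth)

lemma induces_S_basis_nonzero_not_in_span:
  assumes "induces_S_basis u"
  shows "u \<noteq> 0" and "u \<notin> span {S_op u, S_op (S_op (S_op u))}"
proof -
  define B where "B = {u, S_op u, S_op (S_op u), S_op (S_op (S_op u))}"
  have "card B = 4" and indep: "independent B"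
    using assms unfolding induces_S_basis_def B_def Let_def by auto
  then have "u \<noteq> S_op u" "u \<noteq> S_op (S_op (S_op u))"
    unfolding B_def by (auto simp: card_insert_if split: if_splits)
  then have "{S_op u, S_op (S_op (S_op u))} \<subseteq> B - {u}"
    unfolding B_def by auto
  then have "span {S_op u, S_op (S_op (S_op u))} \<subseteq> span (B - {u})"
    by (rule span_mono)
  moreover have "u \<notin> span (B - {u})"
    using indep unfolding dependent_def B_def by blast
  ultimately show "u \<notin> span {S_op u, S_op (S_op (S_op u))}"
    by blast
  show "u \<noteq> 0"
    using indep dependent_zero unfolding B_def by blast
qed

locale isometric_S4 =
  fixes g :: "'a::real_vector \<Rightarrow> 'a \<Rightarrow> real" and S :: "'a \<Rightarrow> 'a"
  assumes bilinear: "bilinear g"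
    and symmetric: "g x y = g y x"
    and isometry [simp]: "g (S x) (S y) = g x y"
    and S_pow4 [simp]: "S (S (S (S x))) = - x"
begin

lemma g_S_pow2: "g x (S (S x)) = 0"
proof -
  have "g x (S (S x)) = g (S (S x)) (S (S (S (S x))))"
    by (simp only: isometry)
  also have "\<dots> = - g x (S (S x))"
    by (simp add: bilinear_rneg[OF bilinear] symmetric[of "S (S x)"])
  finally show ?thesis
    by simp
qed

lemma g_S_pow3: "g x (S (S (S x))) = - g x (S x)"
proof -
  have "g x (S (S (S x))) = g (S x) (S (S (S (S x))))"
    by (simp only: isometry)
  also have "\<dots> = - g x (S x)"
    by (simp add: bilinear_rneg[OF bilinear] symmetric[of "S x"])
  finally show ?thesis .
qed

lemma g_quadratic_form_expand:
  "g (c *\<^sub>R u - d *\<^sub>R (S u - S (S (S u)))) (c *\<^sub>R u - d *\<^sub>R (S u - S (S (S u))))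
     = (c\<^sup>2 + 2 * d\<^sup>2) * g u u - 4 * c * d * g u (S u)"
proof -
  have "g (S u) (S (S (S u))) = 0" and "g (S (S (S u))) (S u) = 0"
    using g_S_pow2[of u] by (simp_all add: symmetric[of "S (S u)" u] symmetric[of "S (S (S u))"])
  moreover have "g (S (S (S u))) u = - g u (S u)" and "g (S u) u = g u (S u)"
    using g_S_pow3[of u] by (simp_all add: symmetric[of _ u])
  ultimately show ?thesis
    by (simp only: bilinear_lsub[OF bilinear] bilinear_rsub[OF bilinear]
        bilinear_lmul[OF bilinear] bilinear_rmul[OF bilinear] isometry real_scaleR_def)
      (simp add: g_S_pow3 power2_eq_square algebra_simps)
qed

lemma abs_g_S_less:
  assumes posdef: "\<And>x. x \<noteq> 0 \<Longrightarrow> 0 < g x x"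
    and u: "u \<notin> span {S u, S (S (S u))}"
  shows "sqrt 2 * \<bar>g u (S u)\<bar> < g u u"
proof -
  define e :: real where "e = (if 0 \<le> g u (S u) then 1 else -1)"
  have e_sq: "e\<^sup>2 = 1" and e_abs: "e * g u (S u) = \<bar>g u (S u)\<bar>"
    by (simp_all add: e_def)
  define w where "w = sqrt 2 *\<^sub>R u - e *\<^sub>R (S u - S (S (S u)))"
  have "w \<noteq> 0"
  proof
    assume "w = 0"
    then have "sqrt 2 *\<^sub>R u = e *\<^sub>R (S u - S (S (S u)))"
      unfolding w_def by simp
    also have "\<dots> \<in> span {S u, S (S (S u))}"
      by (intro span_mul span_diff span_base) auto
    finally have "(1 / sqrt 2) *\<^sub>R (sqrt 2 *\<^sub>R u) \<in> span {S u, S (S (S u))}"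
      by (rule span_mul)
    then show False
      using u by simp
  qed
  then have "0 < g w w"
    by (rule posdef)
  also have "g w w = 4 * g u u - 4 * sqrt 2 * \<bar>g u (S u)\<bar>"
    unfolding w_def g_quadratic_form_expand e_sq using e_abs
    by (simp add: algebra_simps)
  finally show ?thesis
    by simp
qed

end

lemma abs_divide_less_sqrt2_half:
  fixes a p :: real
  assumes "0 < p" "sqrt 2 * \<bar>a\<bar> < p"
  shows "\<bar>a / p\<bar> < sqrt 2 / 2"
proof -
  have "sqrt 2 * (sqrt 2 * \<bar>a\<bar>) < sqrt 2 * p"
    using assms(2) by (rule mult_strict_left_mono) simp
  then have "2 * \<bar>a\<bar> < p * sqrt 2"
    by (simp only: mult.assoc[symmetric] real_sqrt_mult_self) (simp add: mult.commute)
  with assms(1) show ?thesis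
    by (simp add: abs_div field_simps)
qed

lemma cos_less_sqrt2_half_imp_bounds:
  fixes \<phi> :: real
  assumes "0 \<le> \<phi>" "\<phi> \<le> pi" "\<bar>cos \<phi>\<bar> < sqrt 2 / 2"
  shows "pi/4 < \<phi>" "\<phi> < 3*pi/4"
proof -
  have "cos (3*pi/4) = - (sqrt 2 / 2)"
    using cos_pi_minus[of "pi/4"] by (simp add: cos_45 field_simps)
  then have "cos \<phi> < cos (pi/4)" "cos (3*pi/4) < cos \<phi>"
    using assms(3) by (auto simp: cos_45)
  then show "pi/4 < \<phi>" "\<phi> < 3*pi/4"
    using assms(1,2) by (simp_all add: cos_mono_less_eq)
qed

lemma cos_sign_iff_0_pi:
  fixes \<phi> :: real
  assumes "0 \<le> \<phi>" "\<phi> \<le> pi"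
  shows "0 < cos \<phi> \<longleftrightarrow> \<phi> < pi/2" "cos \<phi> = 0 \<longleftrightarrow> \<phi> = pi/2" "cos \<phi> < 0 \<longleftrightarrow> pi/2 < \<phi>"
  using cos_mono_less_eq[of \<phi> "pi/2"] cos_mono_less_eq[of "pi/2" \<phi>] cos_inj_pi[of \<phi> "pi/2"] assms
  by auto

lemma g_angle_equal_norms:
  assumes "0 < g u u" "g v v = g u u" "\<bar>g u v / g u u\<bar> \<le> 1"
  shows "cos (g_angle g u v) = g u v / g u u" "0 \<le> g_angle g u v" "g_angle g u v \<le> pi"
proof -
  have "g_angle g u v = arccos (g u v / g u u)"
    unfolding g_angle_def g_norm_def using assms(1,2) by (simp add: real_sqrt_mult_self)
  then show "cos (g_angle g u v) = g u v / g u u" "0 \<le> g_angle g u v" "g_angle g u v \<le> pi"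
    using arccos[of "g u v / g u u"] assms(3) unfolding abs_le_iff by auto
qed

theorem theorem2p2:
  fixes g :: "real^4 \<Rightarrow> real^4 \<Rightarrow> real" and u :: "real^4" and \<phi> :: real
  assumes bil: "bilinear g"
    and sym: "\<And>x y. g x y = g y x"
    and posdef: "\<And>x. x \<noteq> 0 \<Longrightarrow> g x x > 0"
    and compat: "\<And>x y. g (S_op x) (S_op y) = g x y"
    and basis: "induces_S_basis u"
    and phi: "\<phi> = g_angle g u (S_op u)"
  shows "(space_like g u \<longleftrightarrow> \<phi> \<in> {pi/4<..<pi/2})
       \<and> (isotropic g u \<longleftrightarrow> \<phi> = pi/2)
       \<and> (time_like g u \<longleftrightarrow> \<phi> \<in> {pi/2<..<3*pi/4})"
proof -
  interpret isometric_S4 g S_op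
    using bil sym compat S_op_pow4 by unfold_locales
  define p where "p = g u u"
  have "u \<noteq> 0"
    using basis by (rule induces_S_basis_nonzero_not_in_span)
  then have "0 < p"
    unfolding p_def by (rule posdef)
  have "sqrt 2 * \<bar>g u (S_op u)\<bar> < p"
    unfolding p_def using posdef induces_S_basis_nonzero_not_in_span(2)[OF basis]
    by (rule abs_g_S_less)
  with \<open>0 < p\<close> have small: "\<bar>g u (S_op u) / p\<bar> < sqrt 2 / 2"
    by (rule abs_divide_less_sqrt2_half)
  then have "\<bar>g u (S_op u) / p\<bar> \<le> 1"
    using sqrt2_less_2 by linarith
  with \<open>0 < p\<close> have "cos \<phi> = g u (S_op u) / p" "0 \<le> \<phi>" "\<phi> \<le> pi"
    unfolding phi p_def using g_angle_equal_norms[of g u "S_op u"] by simp_all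
  with small have "pi/4 < \<phi>" "\<phi> < 3*pi/4"
    using cos_less_sqrt2_half_imp_bounds by auto
  have "assoc_metric g u u = 2 * p * cos \<phi>"
    unfolding assoc_metric_def \<open>cos \<phi> = _\<close> using \<open>0 < p\<close> sym[of "S_op u" u] by simp
  with \<open>0 < p\<close> show ?thesis
    unfolding space_like_def isotropic_def time_like_def
    using cos_sign_iff_0_pi[OF \<open>0 \<le> \<phi>\<close> \<open>\<phi> \<le> pi\<close>] \<open>u \<noteq> 0\<close> \<open>pi/4 < \<phi>\<close> \<open>\<phi> < 3*pi/4\<close>
    by (auto simp: zero_less_mult_iff mult_less_0_iff)
qed

end
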